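(* Assume $|V|\ge 3$. Suppose the notion of strategic manipulation is weakened by removing requirement (a) (that the manipulated profile $(\vec s_{-C},\vec s'_C)$ be legal), keeping only requirement (b). Then for every $c\ge 1$ and $f\ge 1$ there is no $(c,f)$-resilient consensus protocol under this modified notion.
   Context: Model. There are $n$ agents $\Pi=\{1,\dots,n\}$ proceeding in synchronous rounds $1,2,\dots$. In each round every agent first chooses, for each agent $j$, a message to send to $j$ or no message; then it receives the messages sent to it in that round; then it updates its local state. Channels are reliable. A failure pattern $F$ is a subset of $\{(i,j,r): i,j\in\Pi, r\ge 1\}$, where $(i,j,r)\in F$ means that $i$'s round-$r$ message to $j$ would be delivered if sent; it must satisfy: if $(i,j,r)\notin F$ then $(i,j',r')\notin F$ for all $j'$ and all $r'>r$. Agent $i$ is correct if $(i,j,r)\in F$ for all $j,r$, and faulty otherwise; a faulty agent stops acting after it crashes. In a system with at most $f$ crash failures only failure patterns with at most $f$ faulty agents occur. $V$ is a finite set of proposal values; the private type $\theta_i$ of agent $i$ is a strict total order on $V$. A (deterministic) strategy $s_i$ maps $\theta_i$ to a function from (round $r$, messages received in rounds $1..r$) to (messages to send in round $r+1$, a decision in $V\cup\{\top\}$ or $\bot$ = no decision), $\top\notin V$; each agent decides at most once. A protocol is a profile $\vec s=(s_1,\dots,s_n)$; the run $R(F,\vec\theta,\vec s)$ is determined by $F$, $\vec\theta$, $\vec s$. Legal profile: for every admissible $F$ and every $\vec\theta$: Termination (every correct agent eventually decides), Uniform Agreement (no two agents decide differently), Validity (any decision is an element of $V$ that is the most preferred value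 of some agent). Utility of $i$: $0$ if $i$ crashes in $F$; if consensus holds with decision $d$, a positive value strictly increasing in $i$'s preference for $d$; $-\infty$ if consensus is violated. Colluders $C$ may use strategies depending on all colluders' types. Original definition: $C$ can strategically manipulate a legal $\vec s$ if there is $\vec s'_C$ with (a) $(\vec s_{-C},\vec s'_C)$ legal, and (b) some admissible $F$ and some $\vec\theta$ in which all members of $C$ have the same most preferred value, such that some $i\in C$ has strictly higher utility under $(\vec s_{-C},\vec s'_C)$ than under $\vec s$. A $(c,f)$-resilient consensus protocol is a legal profile that no group of size at most $c$ can strategically manipulate, in a system with at most $f$ crash failures. *)

theory Defs
  imports Main "HOL-Library.Extended_Real"
begin

text \<open>
  Agents are the natural numbers 0,...,n-1 (the paper's 1..n, shifted).
  Rounds are 1,2,...  A failure pattern is a set of triples (i,j,r):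
  (i,j,r) in F means that i's round-r message to j would be delivered if sent.
  A type (preference) is a strict total order on 'v; (x,y) in theta means
  that x is strictly preferred to y.
\<close>

datatype 'v dec = NoDec | TopDec | Val 'v
  (* NoDec = no decision (bot), TopDec = the special decision top (not in V) *)

type_synonym 'm hist = "(nat \<Rightarrow> 'm option) list"
  (* element k-1 of the list: messages received in round k, indexed by sender *)

type_synonym ('v,'m) local = "nat \<Rightarrow> 'm hist \<Rightarrow> (nat \<Rightarrow> 'm option) \<times> 'v dec"
  (* local function: (round r, messages received in rounds 1..r) \<mapsto>
     (messages to send in round r+1 indexed by receiver, decision) *)

type_synonym ('v,'m) strategy = "'v rel \<Rightarrow> ('v,'m) local"
type_synonym ('v,'m) profile = "nat \<Rightarrow> ('v,'m) strategy"
  (* colluders' strategies may depend on all colluders' types *)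
type_synonym ('v,'m) coalition_strategy = "nat \<Rightarrow> (nat \<Rightarrow> 'v rel) \<Rightarrow> ('v,'m) local"

definition pref_type :: "'v rel \<Rightarrow> bool" where
  "pref_type \<theta> \<longleftrightarrow> strict_linear_order \<theta>"

definition top_pref :: "'v rel \<Rightarrow> 'v" where
  "top_pref \<theta> = (THE v. \<forall>w. w \<noteq> v \<longrightarrow> (v, w) \<in> \<theta>)"

definition admissible :: "nat \<Rightarrow> nat \<Rightarrow> (nat \<times> nat \<times> nat) set \<Rightarrow> bool" where
  "admissible n f F \<longleftrightarrow>
     F \<subseteq> {(i, j, r). i < n \<and> j < n \<and> r \<ge> 1} \<and>
     (\<forall>i j r j' r'. i < n \<and> j < n \<and> j' < n \<and> r \<ge> 1 \<and> r < r' \<and> (i, j, r) \<notin> F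
         \<longrightarrow> (i, j', r') \<notin> F) \<and>
     card {i. i < n \<and> \<not> (\<forall>j r. j < n \<and> r \<ge> 1 \<longrightarrow> (i, j, r) \<in> F)} \<le> f"

definition correct :: "nat \<Rightarrow> (nat \<times> nat \<times> nat) set \<Rightarrow> nat \<Rightarrow> bool" where
  "correct n F i \<longleftrightarrow> (\<forall>j r. j < n \<and> r \<ge> 1 \<longrightarrow> (i, j, r) \<in> F)"

text \<open>A faulty agent crashing in round r
  sends its round-r messages (some of which are lost) and then stops.\<close>
definition acts :: "nat \<Rightarrow> (nat \<times> nat \<times> nat) set \<Rightarrow> nat \<Rightarrow> nat \<Rightarrow> bool" where
  "acts n F i r \<longleftrightarrow> (\<forall>r' j. 1 \<le> r' \<and> r' \<le> r \<and> j < n \<longrightarrow> (i, j, r') \<in> F)"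

text \<open>A message of j to i in round r+1 is delivered iff
  (j,i,r+1) in F; by the failure-pattern condition j has then not crashed before.\<close>
fun hist :: "nat \<Rightarrow> (nat \<Rightarrow> ('v,'m) local) \<Rightarrow> (nat \<times> nat \<times> nat) set \<Rightarrow> nat \<Rightarrow> nat \<Rightarrow> 'm hist" where
  "hist n P F 0 i = []"
| "hist n P F (Suc r) i = hist n P F r i @
     [\<lambda>j. if j < n \<and> (j, i, Suc r) \<in> F then fst (P j r (hist n P F r j)) i else None]"

definition decision :: "nat \<Rightarrow> (nat \<Rightarrow> ('v,'m) local) \<Rightarrow> (nat \<times> nat \<times> nat) set \<Rightarrow> nat \<Rightarrow> 'v dec" where
  "decision n P F i =
     (if \<exists>r. acts n F i r \<and> snd (P i r (hist n P F r i)) \<noteq> NoDec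
      then snd (P i (LEAST r. acts n F i r \<and> snd (P i r (hist n P F r i)) \<noteq> NoDec)
                  (hist n P F (LEAST r. acts n F i r \<and> snd (P i r (hist n P F r i)) \<noteq> NoDec) i))
      else NoDec)"

definition consensus :: "nat \<Rightarrow> (nat \<Rightarrow> ('v,'m) local) \<Rightarrow> (nat \<times> nat \<times> nat) set \<Rightarrow> (nat \<Rightarrow> 'v rel) \<Rightarrow> bool" where
  "consensus n P F \<theta> \<longleftrightarrow>
     (\<forall>i. i < n \<and> correct n F i \<longrightarrow> decision n P F i \<noteq> NoDec) \<and>
     (\<forall>i j. i < n \<and> j < n \<and> decision n P F i \<noteq> NoDec \<and> decision n P F j \<noteq> NoDec
        \<longrightarrow> decision n P F i = decision n P F j) \<and>
     (\<forall>i. i < n \<and> decision n P F i \<noteq> NoDec \<longrightarrow>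
        (\<exists>v k. decision n P F i = Val v \<and> k < n \<and> v = top_pref (\<theta> k)))"

definition local_of :: "('v,'m) profile \<Rightarrow> (nat \<Rightarrow> 'v rel) \<Rightarrow> nat \<Rightarrow> ('v,'m) local" where
  "local_of s \<theta> i = s i (\<theta> i)"

definition deviate_local :: "('v,'m) profile \<Rightarrow> nat set \<Rightarrow> ('v,'m) coalition_strategy
     \<Rightarrow> (nat \<Rightarrow> 'v rel) \<Rightarrow> nat \<Rightarrow> ('v,'m) local" where
  "deviate_local s C s' \<theta> i =
     (if i \<in> C then s' i (\<lambda>j. if j \<in> C then \<theta> j else {}) else s i (\<theta> i))"


definition legal_locals :: "nat \<Rightarrow> nat \<Rightarrow> ((nat \<Rightarrow> 'v rel) \<Rightarrow> nat \<Rightarrow> ('v,'m) local) \<Rightarrow> bool" where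
  "legal_locals n f L \<longleftrightarrow>
     (\<forall>F \<theta>. admissible n f F \<and> (\<forall>i. pref_type (\<theta> i)) \<longrightarrow> consensus n (L \<theta>) F \<theta>)"

definition legal_profile :: "nat \<Rightarrow> nat \<Rightarrow> ('v,'m) profile \<Rightarrow> bool" where
  "legal_profile n f s \<longleftrightarrow> legal_locals n f (local_of s)"

definition utility_ok :: "(nat \<Rightarrow> 'v rel \<Rightarrow> 'v \<Rightarrow> real) \<Rightarrow> bool" where
  "utility_ok u \<longleftrightarrow> (\<forall>i \<theta> v w. pref_type \<theta> \<longrightarrow> 0 < u i \<theta> v \<and> ((v, w) \<in> \<theta> \<longrightarrow> u i \<theta> w < u i \<theta> v))"

definition utility :: "nat \<Rightarrow> (nat \<Rightarrow> 'v rel \<Rightarrow> 'v \<Rightarrow> real) \<Rightarrow> (nat \<Rightarrow> ('v,'m) local)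
    \<Rightarrow> (nat \<times> nat \<times> nat) set \<Rightarrow> (nat \<Rightarrow> 'v rel) \<Rightarrow> nat \<Rightarrow> ereal" where
  "utility n u P F \<theta> i =
     (if \<not> correct n F i then 0
      else if consensus n P F \<theta> then
        (case decision n P F i of Val d \<Rightarrow> ereal (u i (\<theta> i) d) | _ \<Rightarrow> -\<infinity>)
      else -\<infinity>)"

definition weakly_manipulable :: "nat \<Rightarrow> nat \<Rightarrow> (nat \<Rightarrow> 'v rel \<Rightarrow> 'v \<Rightarrow> real)
    \<Rightarrow> ('v,'m) profile \<Rightarrow> nat set \<Rightarrow> bool" where
  "weakly_manipulable n f u s C \<longleftrightarrow>
     (\<exists>s' :: ('v,'m) coalition_strategy. \<exists>F \<theta>.
        admissible n f F \<and> (\<forall>i. pref_type (\<theta> i)) \<and>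
        (\<forall>i\<in>C. \<forall>j\<in>C. top_pref (\<theta> i) = top_pref (\<theta> j)) \<and>
        (\<exists>i\<in>C. utility n u (local_of s \<theta>) F \<theta> i
                 < utility n u (deviate_local s C s' \<theta>) F \<theta> i))"

definition weakly_resilient :: "nat \<Rightarrow> nat \<Rightarrow> nat \<Rightarrow> (nat \<Rightarrow> 'v rel \<Rightarrow> 'v \<Rightarrow> real)
    \<Rightarrow> ('v,'m) profile \<Rightarrow> bool" where
  "weakly_resilient n c f u s \<longleftrightarrow>
     legal_profile n f s \<and>
     (\<forall>C. C \<subseteq> {..<n} \<and> card C \<le> c \<longrightarrow> \<not> weakly_manipulable n f u s C)"

end

theory Submission
  imports Defs
begin

text \<open>
  Without the legality requirement, a single agent \<open>i\<close> may deviate by replaying the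
  run it would see under another failure pattern that differs from the actual one only
  in the messages delivered to \<open>i\<close>.  Resilience therefore forces a correct agent's
  decision to be insensitive to which messages it receives.  Letting an agent \<open>j\<close> crash
  later and later, one round and one receiver at a time, this shows that the decision
  in the failure-free run equals the decision in the run where \<open>j\<close> crashes before
  sending anything, which cannot depend on \<open>j\<close>'s type.  Changing the types one agent
  at a time then moves from the profile where everybody prefers \<open>a\<close> most to the one where
  everybody prefers \<open>b\<close> most without changing the failure-free decision, contradicting
  validity.  Two distinct values suffice.
\<close>

lemma hist_cong:
  fixes P1 P2 :: "nat \<Rightarrow> ('v,'m) local"
  assumes delivered: "\<And>t k x. t < T \<Longrightarrow> k \<in> A \<Longrightarrow> x < n \<Longrightarrow>
      (x, k, Suc t) \<in> F1 \<longleftrightarrow> (x, k, Suc t) \<in> F2"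
    and sent: "\<And>t k x. t < T \<Longrightarrow> k \<in> A \<Longrightarrow> x < n \<Longrightarrow> (x, k, Suc t) \<in> F1 \<Longrightarrow>
      (\<And>k'. k' \<in> A \<Longrightarrow> hist n P1 F1 t k' = hist n P2 F2 t k') \<Longrightarrow>
      fst (P1 x t (hist n P1 F1 t x)) k = fst (P2 x t (hist n P2 F2 t x)) k"
  shows "t \<le> T \<Longrightarrow> k \<in> A \<Longrightarrow> hist n P1 F1 t k = hist n P2 F2 t k"
proof (induction t arbitrary: k)
  case 0
  then show ?case by simp
next
  case (Suc t)
  have IH: "\<And>k'. k' \<in> A \<Longrightarrow> hist n P1 F1 t k' = hist n P2 F2 t k'"
    using Suc by simp
  have "t < T" using Suc by simp
  show ?case
    using IH[OF Suc.prems(2)] delivered[OF \<open>t < T\<close> Suc.prems(2)]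
      sent[OF \<open>t < T\<close> Suc.prems(2) _ _ IH]
    by (auto intro!: ext)
qed

lemma decision_cong:
  assumes "\<And>t. acts n F1 k t = acts n F2 k t"
    and "\<And>t. snd (P1 k t (hist n P1 F1 t k)) = snd (P2 k t (hist n P2 F2 t k))"
  shows "decision n P1 F1 k = decision n P2 F2 k"
  unfolding decision_def assms ..

lemma decision_cong_upto:
  assumes acts_eq: "\<And>t. t \<le> T \<Longrightarrow> acts n F1 k t = acts n F2 k t"
    and out_eq: "\<And>t. t \<le> T \<Longrightarrow> snd (P1 k t (hist n P1 F1 t k)) = snd (P2 k t (hist n P2 F2 t k))"
    and "acts n F1 k T" and "snd (P1 k T (hist n P1 F1 T k)) \<noteq> NoDec"
  shows "decision n P1 F1 k = decision n P2 F2 k"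
proof -
  define p1 where "p1 t \<longleftrightarrow> acts n F1 k t \<and> snd (P1 k t (hist n P1 F1 t k)) \<noteq> NoDec" for t
  define p2 where "p2 t \<longleftrightarrow> acts n F2 k t \<and> snd (P2 k t (hist n P2 F2 t k)) \<noteq> NoDec" for t
  have p_eq: "t \<le> T \<Longrightarrow> p1 t \<longleftrightarrow> p2 t" for t
    using acts_eq out_eq unfolding p1_def p2_def by simp
  have "p1 T" using assms(3,4) p1_def by simp
  then have "p2 T" using p_eq by simp
  have le_T: "Least p1 \<le> T" using \<open>p1 T\<close> by (rule Least_le)
  have "Least p2 = Least p1"
  proof (rule Least_equality)
    show "p2 (Least p1)" using p_eq le_T LeastI[of p1, OF \<open>p1 T\<close>] by simp
    show "Least p1 \<le> y" if "p2 y" for y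
      using p_eq that le_T by (cases "y \<le> T") (simp_all add: Least_le)
  qed
  moreover have "decision n P1 F1 k = snd (P1 k (Least p1) (hist n P1 F1 (Least p1) k))"
    unfolding decision_def p1_def[symmetric] using \<open>p1 T\<close> by auto
  moreover have "decision n P2 F2 k = snd (P2 k (Least p2) (hist n P2 F2 (Least p2) k))"
    unfolding decision_def p2_def[symmetric] using \<open>p2 T\<close> by auto
  ultimately show ?thesis using le_T out_eq by simp
qed

lemma correct_iff_acts: "correct n F i \<longleftrightarrow> (\<forall>r. acts n F i r)"
  unfolding correct_def acts_def by (meson order_refl)

definition no_crash :: "nat \<Rightarrow> (nat \<times> nat \<times> nat) set" where
  "no_crash n = {(a, b, t). a < n \<and> b < n \<and> 1 \<le> t}"

text \<open>Only agent \<open>j\<close> crashes, in round \<open>r\<close>; its round-\<open>r\<close> messages reach exactly the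
  receivers in \<open>S\<close>.  For \<open>r = 0\<close> it sends nothing at all.\<close>
definition crash_pattern :: "nat \<Rightarrow> nat \<Rightarrow> nat \<Rightarrow> nat set \<Rightarrow> (nat \<times> nat \<times> nat) set" where
  "crash_pattern n j r S =
     {(a, b, t). a < n \<and> b < n \<and> 1 \<le> t \<and> (a \<noteq> j \<or> t < r \<or> (t = r \<and> b \<in> S))}"

lemma correct_no_crash: "0 < n \<Longrightarrow> correct n (no_crash n) k \<longleftrightarrow> k < n"
  unfolding correct_def no_crash_def by auto

lemma admissible_no_crash: "admissible n f (no_crash n)"
proof -
  have no_faulty: "{i. i < n \<and> \<not> (\<forall>j r. j < n \<and> r \<ge> 1 \<longrightarrow> (i, j, r) \<in> no_crash n)} = {}"
    unfolding no_crash_def by auto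
  show ?thesis unfolding admissible_def no_faulty by (auto simp: no_crash_def)
qed

lemma correct_crash_pattern:
  assumes "j < n"
  shows "correct n (crash_pattern n j r S) k \<longleftrightarrow> k < n \<and> k \<noteq> j"
proof
  assume "correct n (crash_pattern n j r S) k"
  then have "(k, j, Suc r) \<in> crash_pattern n j r S"
    using assms unfolding correct_def by simp
  then show "k < n \<and> k \<noteq> j" unfolding crash_pattern_def by auto
qed (auto simp: correct_def crash_pattern_def)

lemma admissible_crash_pattern:
  assumes "j < n" and "1 \<le> f"
  shows "admissible n f (crash_pattern n j r S)"
proof -
  let ?faulty = "{i. i < n \<and> \<not> (\<forall>j' r'. j' < n \<and> r' \<ge> 1 \<longrightarrow> (i, j', r') \<in> crash_pattern n j r S)}"
  have "?faulty \<subseteq> {j}" unfolding crash_pattern_def by auto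
  then have "card ?faulty \<le> f"
    using card_mono[of "{j}" ?faulty] \<open>1 \<le> f\<close> by simp
  moreover have "(i, j', r') \<notin> crash_pattern n j r S"
    if "i < n" "j0 < n" "r0 < r'" "r0 \<ge> 1" "(i, j0, r0) \<notin> crash_pattern n j r S" for i j0 r0 j' r'
    using that unfolding crash_pattern_def by auto
  ultimately show ?thesis
    unfolding admissible_def by (auto simp: crash_pattern_def)
qed

lemma acts_crash_pattern_cong:
  assumes "j < n" "j \<notin> S1" "j \<notin> S2"
  shows "acts n (crash_pattern n j r S1) k t = acts n (crash_pattern n j r S2) k t"
proof (cases "k = j \<and> r \<le> t \<and> 1 \<le> r")
  case True
  have "(j, j, r) \<notin> crash_pattern n j r S1" "(j, j, r) \<notin> crash_pattern n j r S2"
    using assms unfolding crash_pattern_def by auto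
  then show ?thesis using True assms(1) unfolding acts_def by blast
next
  case False
  then have "(k, b, r') \<in> crash_pattern n j r S1 \<longleftrightarrow> (k, b, r') \<in> crash_pattern n j r S2"
    if "1 \<le> r'" "r' \<le> t" for b r'
    using that unfolding crash_pattern_def by auto
  then show ?thesis unfolding acts_def by blast
qed

lemma pref_type_with_top:
  fixes a :: "'v::finite"
  obtains \<theta> where "pref_type \<theta>" "top_pref \<theta> = a"
proof -
  obtain g :: "'v \<Rightarrow> nat" where "inj g"
    using finite_imp_inj_to_nat_seg[OF finite_UNIV[where 'a='v]] by blast
  define rk where "rk x = (if x = a then 0 else Suc (g x))" for x
  have rk_inj: "rk x = rk y \<Longrightarrow> x = y" for x y
    unfolding rk_def using \<open>inj g\<close> by (auto split: if_splits simp: inj_eq)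
  define \<theta> where "\<theta> = {(x, y). rk x < rk y}"
  have "pref_type \<theta>"
    unfolding pref_type_def strict_linear_order_on_def
  proof (intro conjI)
    show "total_on UNIV \<theta>"
    proof (rule total_onI)
      fix x y :: 'v
      assume "x \<noteq> y"
      then have "rk x \<noteq> rk y" using rk_inj by blast
      then show "(x, y) \<in> \<theta> \<or> (y, x) \<in> \<theta>" unfolding \<theta>_def by auto
    qed
  qed (auto simp: \<theta>_def trans_def irrefl_def)
  moreover have "top_pref \<theta> = a"
    unfolding top_pref_def
  proof (rule the_equality)
    show "\<forall>w. w \<noteq> a \<longrightarrow> (a, w) \<in> \<theta>" unfolding \<theta>_def rk_def by auto
    show "v = a" if "\<forall>w. w \<noteq> v \<longrightarrow> (v, w) \<in> \<theta>" for v
    proof (rule ccontr)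
      assume "v \<noteq> a"
      with that have "(v, a) \<in> \<theta>" by auto
      then show False unfolding \<theta>_def rk_def by auto
    qed
  qed
  ultimately show thesis by (rule that)
qed

locale individually_weakly_resilient =
  fixes n f :: nat and u :: "nat \<Rightarrow> 'v rel \<Rightarrow> 'v \<Rightarrow> real" and s :: "('v,'m) profile"
  assumes two_agents: "n \<ge> 2" and one_failure: "f \<ge> 1" and utility_ok: "utility_ok u"
    and legal: "legal_profile n f s"
    and not_manipulable: "\<And>i. i < n \<Longrightarrow> \<not> weakly_manipulable n f u s {i}"
begin

lemma consensus_run:
  "admissible n f F \<Longrightarrow> \<forall>i. pref_type (\<theta> i) \<Longrightarrow> consensus n (local_of s \<theta>) F \<theta>"
  using legal unfolding legal_profile_def legal_locals_def by blast

lemma decisions_agree: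
  assumes "admissible n f F" "\<forall>i. pref_type (\<theta> i)" "a < n" "b < n" "correct n F a" "correct n F b"
  shows "decision n (local_of s \<theta>) F a = decision n (local_of s \<theta>) F b"
  using consensus_run[OF assms(1,2)] assms(3-6) unfolding consensus_def by blast

lemma decision_correct_valid:
  assumes "admissible n f F" "\<forall>i. pref_type (\<theta> i)" "k < n" "correct n F k"
  obtains m where "m < n" "decision n (local_of s \<theta>) F k = Val (top_pref (\<theta> m))"
  using consensus_run[OF assms(1,2)] assms(3,4) unfolding consensus_def by blast

lemma decision_no_crash_unanimous:
  assumes "\<forall>k. pref_type (\<theta> k)" and "\<forall>k<n. top_pref (\<theta> k) = v"
  shows "decision n (local_of s \<theta>) (no_crash n) 0 = Val v"
proof -
  have "0 < n" using two_agents by simp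
  then have "correct n (no_crash n) 0" using correct_no_crash by simp
  then obtain m where "m < n" "decision n (local_of s \<theta>) (no_crash n) 0 = Val (top_pref (\<theta> m))"
    using decision_correct_valid[OF admissible_no_crash assms(1) \<open>0 < n\<close>] by blast
  then show ?thesis using assms(2) by simp
qed

lemma utility_correct:
  assumes "admissible n f F" "\<forall>i. pref_type (\<theta> i)" "k < n" "correct n F k"
  obtains d where "decision n (local_of s \<theta>) F k = Val d"
    and "utility n u (local_of s \<theta>) F \<theta> k = ereal (u k (\<theta> k) d)"
proof -
  obtain m where "decision n (local_of s \<theta>) F k = Val (top_pref (\<theta> m))"
    using decision_correct_valid[OF assms] .
  with consensus_run[OF assms(1,2)] assms(4) show thesis
    using that unfolding utility_def by simp
qed

text \<open>Agent \<open>i\<close> deviates by ignoring what it receives and replaying its honest run under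
  \<open>F2\<close>; since \<open>F1\<close> and \<open>F2\<close> differ only in what reaches \<open>i\<close>, the others see exactly
  their \<open>F2\<close> runs, so the deviation reproduces \<open>i\<close>'s \<open>F2\<close> utility under \<open>F1\<close>.\<close>
lemma utility_not_improved_by_redelivery:
  assumes "admissible n f F1"
    and same_delivery: "\<And>x y t. y \<noteq> i \<Longrightarrow> (x, y, t) \<in> F1 \<longleftrightarrow> (x, y, t) \<in> F2"
    and same_acts: "\<And>k t. acts n F1 k t = acts n F2 k t"
    and "i < n" and types: "\<forall>k. pref_type (\<theta> k)"
  shows "\<not> utility n u (local_of s \<theta>) F1 \<theta> i < utility n u (local_of s \<theta>) F2 \<theta> i"
proof
  assume improved: "utility n u (local_of s \<theta>) F1 \<theta> i < utility n u (local_of s \<theta>) F2 \<theta> i"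
  define L where "L = local_of s \<theta>"
  define s' :: "('v,'m) coalition_strategy" where "s' = (\<lambda>_ _ t _. L i t (hist n L F2 t i))"
  define P where "P = deviate_local s {i} s' \<theta>"
  have P_other: "k \<noteq> i \<Longrightarrow> P k = L k" for k
    by (simp add: P_def deviate_local_def L_def local_of_def)
  have P_i: "P i = (\<lambda>t _. L i t (hist n L F2 t i))"
    by (simp add: P_def deviate_local_def s'_def)
  have hist_other: "hist n P F1 t k = hist n L F2 t k" if "k \<noteq> i" for t k
  proof (rule hist_cong[where T=t and A="-{i}"])
    show "fst (P x t' (hist n P F1 t' x)) k = fst (L x t' (hist n L F2 t' x)) k"
      if "\<And>k'. k' \<in> - {i} \<Longrightarrow> hist n P F1 t' k' = hist n L F2 t' k'" for t' k x
      using P_i P_other that[of x] by (cases "x = i") simp_all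
  qed (use that same_delivery in auto)
  have "snd (P k t (hist n P F1 t k)) = snd (L k t (hist n L F2 t k))" for k t
    using P_i P_other hist_other by (cases "k = i") simp_all
  then have dec: "decision n P F1 k = decision n L F2 k" for k
    using same_acts by (intro decision_cong)
  have cor: "correct n F1 k = correct n F2 k" for k
    using same_acts correct_iff_acts by metis
  have "utility n u P F1 \<theta> i = utility n u L F2 \<theta> i"
    unfolding utility_def consensus_def dec cor ..
  then have "weakly_manipulable n f u s {i}"
    unfolding weakly_manipulable_def using assms(1) types improved
    by (auto simp: P_def L_def intro!: exI[where x=s'] exI[where x=F1] exI[where x=\<theta>])
  then show False using not_manipulable \<open>i < n\<close> by blast
qed

lemma decision_independent_of_delivery:
  assumes "admissible n f F1" "admissible n f F2"
    and same_delivery: "\<And>x y t. y \<noteq> i \<Longrightarrow> (x, y, t) \<in> F1 \<longleftrightarrow> (x, y, t) \<in> F2"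
    and same_acts: "\<And>k t. acts n F1 k t = acts n F2 k t"
    and "i < n" and types: "\<forall>k. pref_type (\<theta> k)" and "correct n F1 i"
  shows "decision n (local_of s \<theta>) F1 i = decision n (local_of s \<theta>) F2 i"
proof -
  have "correct n F2 i"
    using \<open>correct n F1 i\<close> same_acts correct_iff_acts by metis
  obtain d1 where d1: "decision n (local_of s \<theta>) F1 i = Val d1"
    "utility n u (local_of s \<theta>) F1 \<theta> i = ereal (u i (\<theta> i) d1)"
    using utility_correct[OF assms(1) types \<open>i < n\<close> \<open>correct n F1 i\<close>] .
  obtain d2 where d2: "decision n (local_of s \<theta>) F2 i = Val d2"
    "utility n u (local_of s \<theta>) F2 \<theta> i = ereal (u i (\<theta> i) d2)"
    using utility_correct[OF assms(2) types \<open>i < n\<close> \<open>correct n F2 i\<close>] .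
  have "\<not> utility n u (local_of s \<theta>) F1 \<theta> i < utility n u (local_of s \<theta>) F2 \<theta> i"
    by (rule utility_not_improved_by_redelivery) (use assms in auto)
  moreover have "\<not> utility n u (local_of s \<theta>) F2 \<theta> i < utility n u (local_of s \<theta>) F1 \<theta> i"
    by (rule utility_not_improved_by_redelivery) (use assms in auto)
  ultimately have same_u: "u i (\<theta> i) d1 = u i (\<theta> i) d2" using d1 d2 by auto
  have "d1 = d2"
  proof (rule ccontr)
    assume "d1 \<noteq> d2"
    then have "(d1, d2) \<in> \<theta> i \<or> (d2, d1) \<in> \<theta> i"
      using types unfolding pref_type_def strict_linear_order_on_def total_on_def by blast
    then show False
      using utility_ok types same_u unfolding utility_ok_def by (metis less_irrefl)
  qed
  then show ?thesis using d1 d2 by simp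
qed

lemma decision_crash_pattern_insert:
  assumes types: "\<forall>k. pref_type (\<theta> k)" and "j < n" "k < n" "k \<noteq> j" "i < n" "i \<noteq> j" "j \<notin> S"
  shows "decision n (local_of s \<theta>) (crash_pattern n j r (insert i S)) k
       = decision n (local_of s \<theta>) (crash_pattern n j r S) k"
proof -
  have adm: "admissible n f (crash_pattern n j r S')" for S'
    using admissible_crash_pattern \<open>j < n\<close> one_failure by blast
  have cor: "correct n (crash_pattern n j r S') x \<longleftrightarrow> x < n \<and> x \<noteq> j" for S' x
    using correct_crash_pattern[OF \<open>j < n\<close>] .
  have "decision n (local_of s \<theta>) (crash_pattern n j r (insert i S)) i
      = decision n (local_of s \<theta>) (crash_pattern n j r S) i"
  proof (rule decision_independent_of_delivery[OF adm adm])
    show "(x, y, t) \<in> crash_pattern n j r (insert i S) \<longleftrightarrow> (x, y, t) \<in> crash_pattern n j r S"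
      if "y \<noteq> i" for x y t
      using that unfolding crash_pattern_def by auto
    show "acts n (crash_pattern n j r (insert i S)) x t = acts n (crash_pattern n j r S) x t" for x t
      by (rule acts_crash_pattern_cong) (use assms in auto)
  qed (use assms cor in auto)
  moreover have "decision n (local_of s \<theta>) (crash_pattern n j r S') k
      = decision n (local_of s \<theta>) (crash_pattern n j r S') i" for S'
    by (rule decisions_agree[OF adm types]) (use assms cor in auto)
  ultimately show ?thesis by simp
qed

lemma decision_crash_pattern_all_receivers:
  assumes types: "\<forall>k. pref_type (\<theta> k)" and "j < n" "k < n" "k \<noteq> j"
  shows "decision n (local_of s \<theta>) (crash_pattern n j r {}) k
       = decision n (local_of s \<theta>) (crash_pattern n j r {x. x < n \<and> x \<noteq> j}) k"
proof -
  have "decision n (local_of s \<theta>) (crash_pattern n j r {}) k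
      = decision n (local_of s \<theta>) (crash_pattern n j r {x. x < m \<and> x < n \<and> x \<noteq> j}) k" for m
  proof (induction m)
    case 0
    then show ?case by simp
  next
    case (Suc m)
    show ?case
    proof (cases "m < n \<and> m \<noteq> j")
      case True
      then have "{x. x < Suc m \<and> x < n \<and> x \<noteq> j} = insert m {x. x < m \<and> x < n \<and> x \<noteq> j}"
        by auto
      then show ?thesis
        using Suc decision_crash_pattern_insert[OF assms, of m] True by simp
    next
      case False
      then have "{x. x < Suc m \<and> x < n \<and> x \<noteq> j} = {x. x < m \<and> x < n \<and> x \<noteq> j}"
        by auto
      then show ?thesis using Suc by simp
    qed
  qed
  from this[of n] show ?thesis by simp
qed

text \<open>The two patterns differ only in \<open>j\<close>'s round-\<open>r\<close> message to itself, which nobody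
  else can observe.\<close>
lemma decision_crash_pattern_Suc:
  assumes "k \<noteq> j"
  shows "decision n (local_of s \<theta>) (crash_pattern n j r {x. x < n \<and> x \<noteq> j}) k
       = decision n (local_of s \<theta>) (crash_pattern n j (Suc r) {}) k"
proof -
  define F1 where "F1 = crash_pattern n j r {x. x < n \<and> x \<noteq> j}"
  define F2 where "F2 = crash_pattern n j (Suc r) {}"
  define L where "L = local_of s \<theta>"
  have differ_only_at: "(a, b, t) \<in> F1 \<longleftrightarrow> (a, b, t) \<in> F2" if "b \<noteq> j \<or> t \<noteq> r \<or> a \<noteq> j" for a b t
    using that unfolding F1_def F2_def crash_pattern_def by auto
  have early: "(a, b, t) \<in> F1 \<longleftrightarrow> (a, b, t) \<in> F2" if "t < r" for a b t
    using differ_only_at that by simp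
  have hist_early: "hist n L F1 t x = hist n L F2 t x" if "t \<le> r - 1" for t x
    by (rule hist_cong[where T="r - 1" and A=UNIV]) (use that in \<open>auto simp: early\<close>)
  have hist_other: "hist n L F1 t x = hist n L F2 t x" if "x \<noteq> j" for t x
  proof (rule hist_cong[where T=t and A="-{j}"])
    show "fst (L x t' (hist n L F1 t' x)) k' = fst (L x t' (hist n L F2 t' x)) k'"
      if "(x, k', Suc t') \<in> F1" "\<And>k''. k'' \<in> - {j} \<Longrightarrow> hist n L F1 t' k'' = hist n L F2 t' k''"
      for t' k' x
    proof (cases "x = j")
      case True
      then have "Suc t' \<le> r" using that(1) unfolding F1_def crash_pattern_def by auto
      then show ?thesis using hist_early[of t' x] by simp
    next
      case False
      then show ?thesis using that(2)[of x] by simp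
    qed
  qed (use that differ_only_at in auto)
  have "decision n L F1 k = decision n L F2 k"
    by (rule decision_cong) (use differ_only_at hist_other \<open>k \<noteq> j\<close> in \<open>auto simp: acts_def\<close>)
  then show ?thesis unfolding F1_def F2_def L_def .
qed

lemma decision_crash_pattern_round:
  assumes "\<forall>k. pref_type (\<theta> k)" and "j < n" "k < n" "k \<noteq> j"
  shows "decision n (local_of s \<theta>) (crash_pattern n j 0 {}) k
       = decision n (local_of s \<theta>) (crash_pattern n j r {}) k"
proof (induction r)
  case (Suc r)
  then show ?case
    using decision_crash_pattern_all_receivers[OF assms, of r]
      decision_crash_pattern_Suc[OF \<open>k \<noteq> j\<close>, of \<theta> r]
    by simp
qed simp

text \<open>A crash after the round in which \<open>k\<close> decides is invisible to \<open>k\<close>.\<close>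
lemma decision_no_crash_eq_late_crash:
  assumes types: "\<forall>k. pref_type (\<theta> k)" and "k < n" "k \<noteq> j"
  obtains r where "decision n (local_of s \<theta>) (no_crash n) k
                 = decision n (local_of s \<theta>) (crash_pattern n j r {}) k"
proof -
  define L where "L = local_of s \<theta>"
  have "0 < n" using two_agents by simp
  obtain m where "decision n L (no_crash n) k = Val (top_pref (\<theta> m))"
    using decision_correct_valid[OF admissible_no_crash types \<open>k < n\<close>]
      correct_no_crash[OF \<open>0 < n\<close>] \<open>k < n\<close> unfolding L_def by blast
  then obtain T where T: "acts n (no_crash n) k T" "snd (L k T (hist n L (no_crash n) T k)) \<noteq> NoDec"
    unfolding decision_def by (auto split: if_splits)
  define F2 where "F2 = crash_pattern n j (Suc T) {}"
  have same_early: "(a, b, t) \<in> no_crash n \<longleftrightarrow> (a, b, t) \<in> F2" if "a \<noteq> j \<or> t \<le> T" for a b t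
    using that unfolding no_crash_def F2_def crash_pattern_def by auto
  have "hist n L (no_crash n) t x = hist n L F2 t x" if "t \<le> T" for t x
    by (rule hist_cong[where T=T and A=UNIV]) (use that same_early in auto)
  then have "decision n L (no_crash n) k = decision n L F2 k"
    using T same_early \<open>k \<noteq> j\<close> by (intro decision_cong_upto[where T=T]) (auto simp: acts_def)
  then show thesis using that unfolding L_def F2_def by blast
qed

lemma decision_silent_crash_type_update:
  assumes "k \<noteq> j"
  shows "decision n (local_of s \<theta>) (crash_pattern n j 0 {}) k
       = decision n (local_of s (\<theta>(j := t))) (crash_pattern n j 0 {}) k"
proof -
  have silent: "(j, b, t') \<notin> crash_pattern n j 0 {}" for b t'
    unfolding crash_pattern_def by auto
  have hist_other: "hist n (local_of s \<theta>) (crash_pattern n j 0 {}) t' x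
      = hist n (local_of s (\<theta>(j := t))) (crash_pattern n j 0 {}) t' x" if "x \<noteq> j" for t' x
  proof (rule hist_cong[where T=t' and A="-{j}"])
    show "fst (local_of s \<theta> y t'' (hist n (local_of s \<theta>) (crash_pattern n j 0 {}) t'' y)) x' =
          fst (local_of s (\<theta>(j := t)) y t'' (hist n (local_of s (\<theta>(j := t))) (crash_pattern n j 0 {}) t'' y)) x'"
      if "(y, x', Suc t'') \<in> crash_pattern n j 0 {}"
        "\<And>k'. k' \<in> - {j} \<Longrightarrow> hist n (local_of s \<theta>) (crash_pattern n j 0 {}) t'' k'
           = hist n (local_of s (\<theta>(j := t))) (crash_pattern n j 0 {}) t'' k'"
      for t'' x' y
    proof -
      have "y \<noteq> j" using that(1) silent by auto
      then show ?thesis using that(2)[of y] by (simp add: local_of_def)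
    qed
  qed (use that in auto)
  show ?thesis
    by (rule decision_cong) (use hist_other \<open>k \<noteq> j\<close> in \<open>auto simp: local_of_def\<close>)
qed

lemma decision_no_crash_type_update:
  assumes types: "\<forall>k. pref_type (\<theta> k)" and "pref_type t" and "j < n"
  shows "decision n (local_of s \<theta>) (no_crash n) 0 = decision n (local_of s (\<theta>(j := t))) (no_crash n) 0"
proof -
  define k where "k = (if j = 0 then 1 else (0::nat))"
  have k: "k < n" "k \<noteq> j" using two_agents unfolding k_def by auto
  have types': "\<forall>k. pref_type ((\<theta>(j := t)) k)" using types \<open>pref_type t\<close> by simp
  have "0 < n" using two_agents by simp
  have to_k: "decision n (local_of s \<theta>') (no_crash n) 0 = decision n (local_of s \<theta>') (no_crash n) k"
    if "\<forall>k. pref_type (\<theta>' k)" for \<theta>'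
    by (rule decisions_agree[OF admissible_no_crash that]) (use k \<open>0 < n\<close> correct_no_crash in auto)
  have to_silent: "decision n (local_of s \<theta>') (no_crash n) k
      = decision n (local_of s \<theta>') (crash_pattern n j 0 {}) k"
    if types'': "\<forall>k. pref_type (\<theta>' k)" for \<theta>'
  proof -
    obtain r where "decision n (local_of s \<theta>') (no_crash n) k
        = decision n (local_of s \<theta>') (crash_pattern n j r {}) k"
      using decision_no_crash_eq_late_crash[OF types'' k(1,2)] .
    then show ?thesis using decision_crash_pattern_round[OF types'' \<open>j < n\<close> k, of r] by simp
  qed
  have "decision n (local_of s \<theta>) (no_crash n) 0
      = decision n (local_of s \<theta>) (crash_pattern n j 0 {}) k"
    using to_k[OF types] to_silent[OF types] by (rule trans)
  also have "\<dots> = decision n (local_of s (\<theta>(j := t))) (crash_pattern n j 0 {}) k"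
    using \<open>k \<noteq> j\<close> by (rule decision_silent_crash_type_update)
  also have "\<dots> = decision n (local_of s (\<theta>(j := t))) (no_crash n) 0"
    using to_k[OF types'] to_silent[OF types'] by (metis (no_types))
  finally show ?thesis .
qed

lemma decision_no_crash_type_independent:
  assumes "\<forall>k. pref_type (\<theta> k)" and "\<forall>k. pref_type (\<theta>' k)" and "\<forall>k\<ge>n. \<theta> k = \<theta>' k"
  shows "decision n (local_of s \<theta>) (no_crash n) 0 = decision n (local_of s \<theta>') (no_crash n) 0"
proof -
  define mix where "mix m = (\<lambda>k. if k < m then \<theta>' k else \<theta> k)" for m
  have mix_types: "\<forall>k. pref_type (mix m k)" for m
    using assms unfolding mix_def by simp
  have "decision n (local_of s (mix m)) (no_crash n) 0 = decision n (local_of s \<theta>) (no_crash n) 0"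
    if "m \<le> n" for m
    using that
  proof (induction m)
    case (Suc m)
    have "m < n" using Suc.prems by simp
    have "mix (Suc m) = (mix m)(m := \<theta>' m)" by (simp add: mix_def fun_eq_iff)
    moreover have "decision n (local_of s (mix m)) (no_crash n) 0
        = decision n (local_of s ((mix m)(m := \<theta>' m))) (no_crash n) 0"
      using mix_types assms(2) \<open>m < n\<close> by (intro decision_no_crash_type_update) auto
    ultimately show ?case using Suc.IH \<open>m < n\<close> by (metis less_imp_le)
  qed (simp add: mix_def fun_eq_iff)
  moreover have "mix n = \<theta>'" using assms(3) by (auto simp: mix_def fun_eq_iff)
  ultimately show ?thesis by (metis order_refl)
qed

end

theorem proposition2:
  fixes n c f :: nat
    and u :: "nat \<Rightarrow> ('v::finite) rel \<Rightarrow> 'v \<Rightarrow> real"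
  assumes "card (UNIV :: 'v set) \<ge> 3"
    and "n \<ge> 2"
    and "c \<ge> 1"
    and "f \<ge> 1"
    and "utility_ok u"
  shows "\<not> (\<exists>s :: ('v, 'm) profile. weakly_resilient n c f u s)"
proof
  assume "\<exists>s :: ('v, 'm) profile. weakly_resilient n c f u s"
  then obtain s :: "('v, 'm) profile" where "weakly_resilient n c f u s" ..
  then interpret individually_weakly_resilient n f u s
    using assms(2-5) unfolding weakly_resilient_def by unfold_locales auto
  obtain a b :: 'v where "a \<noteq> b"
    using assms(1) card_le_Suc0_iff_eq[of "UNIV :: 'v set"] by auto
  obtain ta tb where ta: "pref_type ta" "top_pref ta = a" and tb: "pref_type tb" "top_pref tb = b"
    using pref_type_with_top by metis
  define \<theta>b where "\<theta>b k = (if k < n then tb else ta)" for k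
  have types: "\<forall>k. pref_type ((\<lambda>_. ta) k)" "\<forall>k. pref_type (\<theta>b k)"
    using ta tb unfolding \<theta>b_def by simp_all
  have "\<forall>k<n. top_pref (\<theta>b k) = b" using tb by (simp add: \<theta>b_def)
  then have "decision n (local_of s \<theta>b) (no_crash n) 0 = Val b"
    by (rule decision_no_crash_unanimous[OF types(2)])
  moreover have "decision n (local_of s (\<lambda>_. ta)) (no_crash n) 0 = Val a"
    using decision_no_crash_unanimous[OF types(1)] ta by simp
  moreover have "\<forall>k\<ge>n. ta = \<theta>b k" unfolding \<theta>b_def by simp
  ultimately show False
    using decision_no_crash_type_independent[OF types] \<open>a \<noteq> b\<close> by simp
qed

end
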